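(* Let $K$ be a number field, let $\alpha>1$ be real, and let $F\in K[[x^{\mathbb{R}}]]$ be a Hahn series satisfying $\sum_{i=0}^d P_i(x)F(x^{\alpha^i})=0$ for some polynomials $P_0,\dots,P_d\in K[x]$ with $P_d\ne0$. For $s\in\mathbb{R}$ let $T(s)=\alpha^{\mathbb{Z}}s+\mathbb{Z}[\alpha,\alpha^{-1}]=\{\alpha^m s+r: m\in\mathbb{Z},\ r\in\mathbb{Z}[\alpha,\alpha^{-1}]\}$; these sets are the equivalence classes of the relation $x\sim y$ iff $\alpha^m x+r=y$ for some $m\in\mathbb{Z}$, $r\in\mathbb{Z}[\alpha,\alpha^{-1}]$. Let $\widehat{P(F)}$ be the set of equivalence classes meeting $P(F)$. Then $$F(x)=\sum_{T(s)\in\widehat{P(F)}}{}_{T(s)}[F(x)],$$ and each ${}_{T(s)}[F]$ is $\alpha$-Mahler, satisfying the same equation $\sum_{i=0}^d P_i(x)\,{}_{T(s)}[F](x^{\alpha^i})=0$.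
   Context: $K[[x^{\mathbb{R}}]]$ is the field of Hahn series $\sum_{i\in\mathbb{R}} f_ix^i$ ($f_i\in K$) with well-ordered support $P(F)=\{i:f_i\ne0\}$; $F(x^\gamma)=\sum_i f_ix^{\gamma i}$. $\mathbb{Z}[\alpha,\alpha^{-1}]$ is the subring of $\mathbb{R}$ generated by $\alpha$ and $\alpha^{-1}$. For $A\subseteq\mathbb{R}$, ${}_A[G]$ denotes the Hahn series consisting of the terms of $G$ with exponents in $A$. *)

theory Defs
  imports "HOL-Analysis.Analysis" "HOL-Computational_Algebra.Polynomial"
begin

definition number_field :: "complex set \<Rightarrow> bool" where
  "number_field K \<longleftrightarrow>
     0 \<in> K \<and> 1 \<in> K \<and>
     (\<forall>x\<in>K. \<forall>y\<in>K. x + y \<in> K \<and> x - y \<in> K \<and> x * y \<in> K) \<and>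
     (\<forall>x\<in>K. x \<noteq> 0 \<longrightarrow> inverse x \<in> K) \<and>
     (\<exists>B. finite B \<and> B \<subseteq> K \<and>
        (\<forall>x\<in>K. \<exists>q. (\<forall>b\<in>B. q b \<in> \<rat>) \<and> x = (\<Sum>b\<in>B. q b * b)))"

text \<open>A Hahn series with real exponents is represented by its coefficient function
  \<open>real \<Rightarrow> 'a\<close>; its support must be well-ordered.\<close>
definition hahn_support :: "(real \<Rightarrow> 'a::zero) \<Rightarrow> real set" where
  "hahn_support f = {i. f i \<noteq> 0}"

definition well_ordered_set :: "real set \<Rightarrow> bool" where
  "well_ordered_set S \<longleftrightarrow> (\<forall>A. A \<subseteq> S \<longrightarrow> A \<noteq> {} \<longrightarrow> (\<exists>m\<in>A. \<forall>x\<in>A. m \<le> x))"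

definition is_hahn_series :: "'a::zero set \<Rightarrow> (real \<Rightarrow> 'a) \<Rightarrow> bool" where
  "is_hahn_series K f \<longleftrightarrow> (\<forall>i. f i \<in> K) \<and> well_ordered_set (hahn_support f)"

text \<open>\<open>F(x^\<gamma>)\<close>: the coefficient at exponent \<open>j\<close> is \<open>f (j/\<gamma>)\<close> (for \<open>\<gamma> > 0\<close>).\<close>
definition hahn_subst :: "(real \<Rightarrow> 'a) \<Rightarrow> real \<Rightarrow> (real \<Rightarrow> 'a)" where
  "hahn_subst f \<gamma> = (\<lambda>j. f (j / \<gamma>))"

definition poly_hahn_mult :: "'a::comm_ring_1 poly \<Rightarrow> (real \<Rightarrow> 'a) \<Rightarrow> (real \<Rightarrow> 'a)" where
  "poly_hahn_mult p f = (\<lambda>j. \<Sum>k\<le>degree p. coeff p k * f (j - real k))"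

definition mahler_eq :: "real \<Rightarrow> nat \<Rightarrow> (nat \<Rightarrow> 'a::comm_ring_1 poly) \<Rightarrow> (real \<Rightarrow> 'a) \<Rightarrow> bool" where
  "mahler_eq \<alpha> d P f \<longleftrightarrow>
     (\<forall>j. (\<Sum>i\<le>d. poly_hahn_mult (P i) (hahn_subst f (\<alpha> ^ i)) j) = 0)"

definition Z_alpha :: "real \<Rightarrow> real set" where
  "Z_alpha \<alpha> = {r. \<exists>(S::int set) (c::int \<Rightarrow> int). finite S \<and> r = (\<Sum>k\<in>S. of_int (c k) * \<alpha> powi k)}"

definition T_class :: "real \<Rightarrow> real \<Rightarrow> real set" where
  "T_class \<alpha> s = {\<alpha> powi m * s + r | m r. r \<in> Z_alpha \<alpha>}"

definition hat_support :: "real \<Rightarrow> (real \<Rightarrow> 'a::zero) \<Rightarrow> real set set" where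
  "hat_support \<alpha> f = {C. \<exists>s. C = T_class \<alpha> s \<and> C \<inter> hahn_support f \<noteq> {}}"

definition hahn_restrict :: "real set \<Rightarrow> (real \<Rightarrow> 'a::zero) \<Rightarrow> (real \<Rightarrow> 'a)" where
  "hahn_restrict A f = (\<lambda>j. if j \<in> A then f j else 0)"

end

theory Submission
  imports Defs
begin

text \<open>The Mahler equation relates the coefficient of \<open>x\<^sup>j\<close> only to coefficients at the
  exponents \<open>(j - k) / \<alpha>\<^sup>i\<close>, and each class \<open>T(s)\<close> is invariant under the affine maps
  \<open>j \<mapsto> (j - k) / \<alpha>\<^sup>i\<close> and their inverses. Restricting \<open>F\<close> to a class therefore
  restricts the equation coefficientwise, while the classes partition \<open>\<real>\<close>, so every
  coefficient of \<open>F\<close> is recovered from exactly one restriction.\<close>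

lemma Z_alphaI: "finite S \<Longrightarrow> r = (\<Sum>k\<in>S. of_int (c k) * \<alpha> powi k) \<Longrightarrow> r \<in> Z_alpha \<alpha>"
  unfolding Z_alpha_def by blast

lemma Z_alphaE:
  assumes "r \<in> Z_alpha \<alpha>"
  obtains S c where "finite S" "r = (\<Sum>k\<in>S. of_int (c k) * \<alpha> powi k)"
  using assms unfolding Z_alpha_def by blast

lemma of_int_mult_powi_in_Z_alpha: "of_int k * \<alpha> powi m \<in> Z_alpha \<alpha>"
  by (rule Z_alphaI[of "{m}" _ "\<lambda>_. k"]) simp_all

lemma zero_in_Z_alpha: "0 \<in> Z_alpha \<alpha>"
  using of_int_mult_powi_in_Z_alpha[of 0 \<alpha> 0] by simp

lemma Z_alpha_add:
  assumes "a \<in> Z_alpha \<alpha>" "b \<in> Z_alpha \<alpha>"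
  shows "a + b \<in> Z_alpha \<alpha>"
proof -
  obtain S1 c1 where S1: "finite S1" and a: "a = (\<Sum>k\<in>S1. of_int (c1 k) * \<alpha> powi k)"
    using assms(1) by (rule Z_alphaE)
  obtain S2 c2 where S2: "finite S2" and b: "b = (\<Sum>k\<in>S2. of_int (c2 k) * \<alpha> powi k)"
    using assms(2) by (rule Z_alphaE)
  define c where "c k = (if k \<in> S1 then c1 k else 0) + (if k \<in> S2 then c2 k else 0)" for k
  have a': "a = (\<Sum>k\<in>S1 \<union> S2. of_int (if k \<in> S1 then c1 k else 0) * \<alpha> powi k)"
    unfolding a using S1 S2 by (intro sum.mono_neutral_cong_left) auto
  have b': "b = (\<Sum>k\<in>S1 \<union> S2. of_int (if k \<in> S2 then c2 k else 0) * \<alpha> powi k)"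
    unfolding b using S1 S2 by (intro sum.mono_neutral_cong_left) auto
  have "a + b = (\<Sum>k\<in>S1 \<union> S2. of_int (c k) * \<alpha> powi k)"
    unfolding a' b' c_def sum.distrib[symmetric] of_int_add distrib_right ..
  with S1 S2 show ?thesis by (intro Z_alphaI) auto
qed

lemma Z_alpha_uminus:
  assumes "a \<in> Z_alpha \<alpha>"
  shows "- a \<in> Z_alpha \<alpha>"
proof -
  obtain S c where S: "finite S" and a: "a = (\<Sum>k\<in>S. of_int (c k) * \<alpha> powi k)"
    using assms by (rule Z_alphaE)
  have "- a = (\<Sum>k\<in>S. of_int (- c k) * \<alpha> powi k)"
    unfolding a by (simp add: sum_negf)
  with S show ?thesis by (rule Z_alphaI)
qed

lemma powi_mult_in_Z_alpha:
  assumes "a \<in> Z_alpha \<alpha>" "\<alpha> \<noteq> 0"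
  shows "\<alpha> powi n * a \<in> Z_alpha \<alpha>"
proof -
  obtain S c where S: "finite S" and a: "a = (\<Sum>k\<in>S. of_int (c k) * \<alpha> powi k)"
    using assms(1) by (rule Z_alphaE)
  have "\<alpha> powi n * a = (\<Sum>k\<in>S. of_int (c k) * \<alpha> powi (k + n))"
    unfolding a sum_distrib_left using assms(2) by (simp add: power_int_add mult_ac)
  also have "\<dots> = (\<Sum>k\<in>(\<lambda>k. k + n) ` S. of_int (c (k - n)) * \<alpha> powi k)"
    by (subst sum.reindex) (auto simp: inj_on_def)
  finally show ?thesis using S by (intro Z_alphaI) auto
qed

lemma T_classI: "r \<in> Z_alpha \<alpha> \<Longrightarrow> x = \<alpha> powi m * s + r \<Longrightarrow> x \<in> T_class \<alpha> s"
  unfolding T_class_def by blast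

lemma T_classE:
  assumes "x \<in> T_class \<alpha> s"
  obtains m r where "r \<in> Z_alpha \<alpha>" "x = \<alpha> powi m * s + r"
  using assms unfolding T_class_def by blast

lemma T_class_self: "s \<in> T_class \<alpha> s"
  by (rule T_classI[OF zero_in_Z_alpha, where m = 0]) simp

lemma affine_in_T_class:
  assumes "x \<in> T_class \<alpha> s" "r \<in> Z_alpha \<alpha>" "\<alpha> \<noteq> 0"
  shows "\<alpha> powi n * x + r \<in> T_class \<alpha> s"
proof -
  obtain m r0 where r0: "r0 \<in> Z_alpha \<alpha>" and x: "x = \<alpha> powi m * s + r0"
    using assms(1) by (rule T_classE)
  have "\<alpha> powi n * x + r = \<alpha> powi (n + m) * s + (\<alpha> powi n * r0 + r)"
    unfolding x using assms(3) by (simp add: power_int_add algebra_simps)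
  moreover have "\<alpha> powi n * r0 + r \<in> Z_alpha \<alpha>"
    using assms r0 by (intro Z_alpha_add powi_mult_in_Z_alpha)
  ultimately show ?thesis by (intro T_classI)
qed

lemma affine_in_T_class_iff:
  assumes "r \<in> Z_alpha \<alpha>" "\<alpha> \<noteq> 0"
  shows "\<alpha> powi n * x + r \<in> T_class \<alpha> s \<longleftrightarrow> x \<in> T_class \<alpha> s"
proof
  assume image: "\<alpha> powi n * x + r \<in> T_class \<alpha> s"
  have "\<alpha> powi (- n) * \<alpha> powi n = 1"
    using assms(2) by (simp add: power_int_add[symmetric])
  then have "x = \<alpha> powi (- n) * (\<alpha> powi n * x + r) + - (\<alpha> powi (- n) * r)"
    by (simp add: distrib_left mult.assoc[symmetric])
  also have "\<dots> \<in> T_class \<alpha> s"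
    using assms by (intro affine_in_T_class[OF image] Z_alpha_uminus powi_mult_in_Z_alpha)
  finally show "x \<in> T_class \<alpha> s" .
next
  assume "x \<in> T_class \<alpha> s"
  with assms show "\<alpha> powi n * x + r \<in> T_class \<alpha> s" by (intro affine_in_T_class)
qed

lemma T_class_subset:
  assumes "y \<in> T_class \<alpha> s" "\<alpha> \<noteq> 0"
  shows "T_class \<alpha> y \<subseteq> T_class \<alpha> s"
proof
  fix z assume "z \<in> T_class \<alpha> y"
  then obtain n r where "r \<in> Z_alpha \<alpha>" "z = \<alpha> powi n * y + r"
    by (rule T_classE)
  with assms show "z \<in> T_class \<alpha> s" by (simp add: affine_in_T_class)
qed

lemma T_class_sym:
  assumes "y \<in> T_class \<alpha> s" "\<alpha> \<noteq> 0"
  shows "s \<in> T_class \<alpha> y"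
proof -
  obtain m r where r: "r \<in> Z_alpha \<alpha>" and y: "y = \<alpha> powi m * s + r"
    using assms(1) by (rule T_classE)
  from assms(2) r T_class_self[of y \<alpha>] show ?thesis
    unfolding y by (simp add: affine_in_T_class_iff)
qed

lemma T_class_eq:
  assumes "y \<in> T_class \<alpha> s" "\<alpha> \<noteq> 0"
  shows "T_class \<alpha> y = T_class \<alpha> s"
  using T_class_subset[OF assms] T_class_subset[OF T_class_sym[OF assms] assms(2)]
  by (rule equalityI)

lemma disjoint_T_class:
  assumes "\<alpha> \<noteq> 0"
  shows "disjoint (range (T_class \<alpha>))"
proof (rule disjointI)
  fix C D assume "C \<in> range (T_class \<alpha>)" "D \<in> range (T_class \<alpha>)" "C \<noteq> D"
  then obtain s t where C: "C = T_class \<alpha> s" and D: "D = T_class \<alpha> t" by blast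
  have False if "x \<in> C" "x \<in> D" for x
    using that \<open>C \<noteq> D\<close> T_class_eq[OF _ assms] unfolding C D by metis
  then show "C \<inter> D = {}" by blast
qed

lemma shift_in_T_class_iff:
  assumes "\<alpha> \<noteq> 0"
  shows "(j - real k) / \<alpha> ^ i \<in> T_class \<alpha> s \<longleftrightarrow> j \<in> T_class \<alpha> s"
proof -
  have "(j - real k) / \<alpha> ^ i = \<alpha> powi (- int i) * j + of_int (- int k) * \<alpha> powi (- int i)"
    by (simp add: power_int_minus power_int_of_nat divide_inverse algebra_simps)
  then show ?thesis
    by (simp only: affine_in_T_class_iff[OF of_int_mult_powi_in_Z_alpha assms])
qed

lemma well_ordered_set_subset: "well_ordered_set S \<Longrightarrow> A \<subseteq> S \<Longrightarrow> well_ordered_set A"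
  unfolding well_ordered_set_def by blast

lemma hahn_support_hahn_restrict: "hahn_support (hahn_restrict A f) = A \<inter> hahn_support f"
  by (auto simp: hahn_support_def hahn_restrict_def)

lemma is_hahn_series_hahn_restrict:
  assumes "is_hahn_series K f" "0 \<in> K"
  shows "is_hahn_series K (hahn_restrict A f)"
  using assms well_ordered_set_subset[of "hahn_support f"]
  unfolding is_hahn_series_def hahn_support_hahn_restrict by (auto simp: hahn_restrict_def)

lemma has_sum_hahn_restrict:
  assumes "disjoint \<C>" "hahn_support f \<subseteq> \<Union>\<C>"
  shows "((\<lambda>C. hahn_restrict C f j) has_sum f j) \<C>"
proof (cases "f j = 0")
  case True
  show ?thesis
    unfolding True by (intro has_sum_0) (simp add: hahn_restrict_def True)
next
  case False
  then obtain C0 where C0: "C0 \<in> \<C>" "j \<in> C0"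
    using assms(2) by (auto simp: hahn_support_def)
  have "j \<notin> C" if "C \<in> \<C> - {C0}" for C
    using disjointD[OF assms(1) _ C0(1)] that C0(2) by blast
  then have "((\<lambda>C. hahn_restrict C f j) has_sum f j) \<C> \<longleftrightarrow>
      ((\<lambda>C. hahn_restrict C f j) has_sum f j) {C0}"
    using C0(1) by (intro has_sum_cong_neutral) (simp_all add: hahn_restrict_def)
  moreover have "((\<lambda>C. hahn_restrict C f j) has_sum f j) {C0}"
    using has_sum_finite[of "{C0}" "\<lambda>C. hahn_restrict C f j"] C0(2)
    by (simp add: hahn_restrict_def)
  ultimately show ?thesis by blast
qed

lemma mahler_eq_hahn_restrict:
  assumes "mahler_eq \<alpha> d P f" "\<And>i k j. (j - real k) / \<alpha> ^ i \<in> A \<longleftrightarrow> j \<in> A"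
  shows "mahler_eq \<alpha> d P (hahn_restrict A f)"
proof -
  have "(\<Sum>i\<le>d. poly_hahn_mult (P i) (hahn_subst (hahn_restrict A f) (\<alpha> ^ i)) j) =
      (if j \<in> A then (\<Sum>i\<le>d. poly_hahn_mult (P i) (hahn_subst f (\<alpha> ^ i)) j) else 0)" for j
    using assms(2) by (simp add: poly_hahn_mult_def hahn_subst_def hahn_restrict_def)
  then show ?thesis
    using assms(1) by (simp add: mahler_eq_def)
qed

lemma hat_support_subset_range: "hat_support \<alpha> f \<subseteq> range (T_class \<alpha>)"
  by (auto simp: hat_support_def)

lemma hahn_support_subset_Union_hat_support: "hahn_support f \<subseteq> \<Union>(hat_support \<alpha> f)"
  using T_class_self by (fastforce simp: hat_support_def)

theorem mainTheorem7:
  fixes K :: "complex set" and \<alpha> :: real and F :: "real \<Rightarrow> complex"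
    and d :: nat and P :: "nat \<Rightarrow> complex poly"
  assumes "number_field K"
    and "\<alpha> > 1"
    and "is_hahn_series K F"
    and "\<forall>i\<le>d. \<forall>k. coeff (P i) k \<in> K"
    and "P d \<noteq> 0"
    and "mahler_eq \<alpha> d P F"
  shows "(\<forall>j. ((\<lambda>C. hahn_restrict C F j) has_sum F j) (hat_support \<alpha> F))
       \<and> (\<forall>C\<in>hat_support \<alpha> F.
            is_hahn_series K (hahn_restrict C F) \<and> mahler_eq \<alpha> d P (hahn_restrict C F))"
proof -
  have \<alpha>: "\<alpha> \<noteq> 0" using assms(2) by simp
  have "0 \<in> K" using assms(1) by (simp add: number_field_def)
  have "disjoint (hat_support \<alpha> F)"
    using disjoint_T_class[OF \<alpha>] hat_support_subset_range by (rule pairwise_subset)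
  then have "((\<lambda>C. hahn_restrict C F j) has_sum F j) (hat_support \<alpha> F)" for j
    using hahn_support_subset_Union_hat_support by (rule has_sum_hahn_restrict)
  moreover have "mahler_eq \<alpha> d P (hahn_restrict C F)" if "C \<in> hat_support \<alpha> F" for C
  proof -
    from that obtain s where "C = T_class \<alpha> s" by (auto simp: hat_support_def)
    with assms(6) shift_in_T_class_iff[OF \<alpha>] show ?thesis by (simp add: mahler_eq_hahn_restrict)
  qed
  ultimately show ?thesis
    using is_hahn_series_hahn_restrict[OF assms(3) \<open>0 \<in> K\<close>] by blast
qed

end
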